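(* Any expressivity situation $\mathscr{S}$ is adequate: for every $B$-coalgebra $x\colon X\to BX$ one has $\nu\bigl(x^*\circ\overline{B}^{\underline{\Omega},\tau}\bigr)\sqsubseteq\bigwedge_{\varphi\in L_{\mathscr{S}}}[\![\varphi]\!]_x^{*}\underline{\Omega}$ in the fiber $\mathcal{E}_X$.
   Context: An expressivity situation $\mathscr{S}=(p,B,\Omega,\underline{\Omega},\Sigma,\Lambda,(f_\sigma)_{\sigma\in\Sigma},(\tau_\lambda)_{\lambda\in\Lambda})$ consists of: a fibration $p\colon\mathcal{E}\to\mathcal{C}$ whose fibers $\mathcal{E}_X$ are complete lattices (order $\sqsubseteq$, meets written $\bigwedge$, top $\top$) and whose reindexing functors $f^*$ preserve arbitrary meets; a functor $B\colon\mathcal{C}\to\mathcal{C}$; an object $\Omega\in\mathcal{C}$ with finite powers and an object $\underline{\Omega}\in\mathcal{E}$ above $\Omega$; a ranked alphabet $\Sigma$ with arrows $f_\sigma\colon\Omega^{\mathrm{rank}(\sigma)}\to\Omega$, each having a lifting $g_\sigma\colon\underline{\Omega}^{\mathrm{rank}(\sigma)}\to\underline{\Omega}$ in $\mathcal{E}$ with $pg_\sigma=f_\sigma$; a set $\Lambda$ and arrows $\tau_\lambda\colon B\Omega\to\Omega$. The logic $L_{\mathscr{S}}$ has formulas $\varphi::=\sigma(\varphi_1,\dots,\varphi_{\mathrm{rank}(\sigma)})\ (\sigma\in\Sigma)\mid\heartsuit_\lambda\varphi\ (\lambda\in\Lambda)$, interpreted on a coalgebra $x\colon X\to BX$ by $[\![\sigma(\varphi_1,\dots)]\!]_x=f_\sigma\circ\langle[\![\varphi_1]\!]_x,\dots\rangle$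 and $[\![\heartsuit_\lambda\varphi]\!]_x=\tau_\lambda\circ B[\![\varphi]\!]_x\circ x$. The codensity lifting is $\overline{B}^{\underline{\Omega},\tau}P=\bigwedge_{\lambda\in\Lambda,\,h\in\mathcal{E}(P,\underline{\Omega})}(\tau_\lambda\circ B(ph))^*\underline{\Omega}$, and the codensity bisimilarity of $x$ is the greatest fixed point $\nu(x^*\circ\overline{B}^{\underline{\Omega},\tau})$ of the monotone map $x^*\circ\overline{B}^{\underline{\Omega},\tau}$ on $\mathcal{E}_X$. The right-hand side of the claim is the fibrational logical equivalence of $x$. *)

theory Defs
  imports Main
begin

record ('o, 'a) category_data =
  obj   :: "'o set"
  arr   :: "'a set"
  dom   :: "'a \<Rightarrow> 'o"
  cod   :: "'a \<Rightarrow> 'o"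
  comp  :: "'a \<Rightarrow> 'a \<Rightarrow> 'a"   (* comp C g f = g \<circ> f *)
  ident :: "'o \<Rightarrow> 'a"

definition hom :: "('o, 'a) category_data \<Rightarrow> 'o \<Rightarrow> 'o \<Rightarrow> 'a set" where
  "hom C X Y = {f \<in> arr C. dom C f = X \<and> cod C f = Y}"

definition is_category :: "('o, 'a) category_data \<Rightarrow> bool" where
  "is_category C \<longleftrightarrow>
     (\<forall>f\<in>arr C. dom C f \<in> obj C \<and> cod C f \<in> obj C) \<and>
     (\<forall>X\<in>obj C. ident C X \<in> hom C X X) \<and>
     (\<forall>f g. f \<in> arr C \<and> g \<in> arr C \<and> cod C f = dom C g \<longrightarrow>
            comp C g f \<in> hom C (dom C f) (cod C g)) \<and>
     (\<forall>f\<in>arr C. comp C (ident C (cod C f)) f = f \<and> comp C f (ident C (dom C f)) = f) \<and>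
     (\<forall>f g h. f \<in> arr C \<and> g \<in> arr C \<and> h \<in> arr C \<and> cod C f = dom C g \<and> cod C g = dom C h
            \<longrightarrow> comp C h (comp C g f) = comp C (comp C h g) f)"

definition is_endofunctor ::
  "('o, 'a) category_data \<Rightarrow> ('o \<Rightarrow> 'o) \<Rightarrow> ('a \<Rightarrow> 'a) \<Rightarrow> bool" where
  "is_endofunctor C Fo Fa \<longleftrightarrow>
     (\<forall>X\<in>obj C. Fo X \<in> obj C) \<and>
     (\<forall>X Y f. f \<in> hom C X Y \<longrightarrow> Fa f \<in> hom C (Fo X) (Fo Y)) \<and>
     (\<forall>X\<in>obj C. Fa (ident C X) = ident C (Fo X)) \<and>
     (\<forall>f g. f \<in> arr C \<and> g \<in> arr C \<and> cod C f = dom C g \<longrightarrow>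
            Fa (comp C g f) = comp C (Fa g) (Fa f))"

definition is_power ::
  "('o, 'a) category_data \<Rightarrow> 'o \<Rightarrow> nat \<Rightarrow> 'o \<Rightarrow> (nat \<Rightarrow> 'a) \<Rightarrow> bool" where
  "is_power C Om n P pr \<longleftrightarrow>
     P \<in> obj C \<and> (\<forall>i<n. pr i \<in> hom C P Om) \<and>
     (\<forall>X\<in>obj C. \<forall>fs. (\<forall>i<n. fs i \<in> hom C X Om) \<longrightarrow>
        (\<exists>!h. h \<in> hom C X P \<and> (\<forall>i<n. comp C (pr i) h = fs i)))"

definition has_finite_powers ::
  "('o, 'a) category_data \<Rightarrow> 'o \<Rightarrow> (nat \<Rightarrow> 'o) \<Rightarrow> (nat \<Rightarrow> nat \<Rightarrow> 'a) \<Rightarrow> bool" where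
  "has_finite_powers C Om pw prj \<longleftrightarrow> (\<forall>n. is_power C Om n (pw n) (prj n))"

definition tuple ::
  "('o, 'a) category_data \<Rightarrow> (nat \<Rightarrow> 'o) \<Rightarrow> (nat \<Rightarrow> nat \<Rightarrow> 'a) \<Rightarrow> 'o \<Rightarrow> nat \<Rightarrow> (nat \<Rightarrow> 'a) \<Rightarrow> 'a" where
  "tuple C pw prj X n fs =
     (THE h. h \<in> hom C X (pw n) \<and> (\<forall>i<n. comp C (prj n i) h = fs i))"

section \<open>CLat-meet fibrations, presented as indexed complete lattices\<close>

record ('o, 'a, 'e) clat_fibration =
  fib   :: "'o \<Rightarrow> 'e set"
  leq   :: "'o \<Rightarrow> 'e \<Rightarrow> 'e \<Rightarrow> bool"
  meet  :: "'o \<Rightarrow> 'e set \<Rightarrow> 'e"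
  reidx :: "'a \<Rightarrow> 'e \<Rightarrow> 'e"

definition is_clat_fibration ::
  "('o, 'a) category_data \<Rightarrow> ('o, 'a, 'e) clat_fibration \<Rightarrow> bool" where
  "is_clat_fibration C E \<longleftrightarrow>
     (\<forall>X\<in>obj C.
        (\<forall>P\<in>fib E X. leq E X P P) \<and>
        (\<forall>P\<in>fib E X. \<forall>Q\<in>fib E X. leq E X P Q \<and> leq E X Q P \<longrightarrow> P = Q) \<and>
        (\<forall>P\<in>fib E X. \<forall>Q\<in>fib E X. \<forall>R\<in>fib E X. leq E X P Q \<and> leq E X Q R \<longrightarrow> leq E X P R) \<and>
        (\<forall>S. S \<subseteq> fib E X \<longrightarrow>
            meet E X S \<in> fib E X \<and> (\<forall>s\<in>S. leq E X (meet E X S) s) \<and>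
            (\<forall>y\<in>fib E X. (\<forall>s\<in>S. leq E X y s) \<longrightarrow> leq E X y (meet E X S)))) \<and>
     (\<forall>X Y f. f \<in> hom C X Y \<longrightarrow>
        (\<forall>P\<in>fib E Y. reidx E f P \<in> fib E X) \<and>
        (\<forall>S. S \<subseteq> fib E Y \<longrightarrow> reidx E f (meet E Y S) = meet E X (reidx E f ` S))) \<and>
     (\<forall>X\<in>obj C. \<forall>P\<in>fib E X. reidx E (ident C X) P = P) \<and>
     (\<forall>X Y Z f g. f \<in> hom C X Y \<and> g \<in> hom C Y Z \<longrightarrow>
        (\<forall>P\<in>fib E Z. reidx E (comp C g f) P = reidx E f (reidx E g P)))"

text \<open>Images under p of the arrows P \<rightarrow> Q of the total category (P above X, Q above Y):
  an arrow f : X \<rightarrow> Y underlies a (unique) arrow P \<rightarrow> Q iff P \<sqsubseteq> f^* Q.\<close>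
definition ehom ::
  "('o, 'a) category_data \<Rightarrow> ('o, 'a, 'e) clat_fibration \<Rightarrow> 'o \<Rightarrow> 'e \<Rightarrow> 'o \<Rightarrow> 'e \<Rightarrow> 'a set" where
  "ehom C E X P Y Q = {f \<in> hom C X Y. leq E X P (reidx E f Q)}"

definition expressivity_situation ::
  "('o, 'a) category_data \<Rightarrow> ('o, 'a, 'e) clat_fibration \<Rightarrow> ('o \<Rightarrow> 'o) \<Rightarrow> ('a \<Rightarrow> 'a) \<Rightarrow>
   'o \<Rightarrow> 'e \<Rightarrow> (nat \<Rightarrow> 'o) \<Rightarrow> (nat \<Rightarrow> nat \<Rightarrow> 'a) \<Rightarrow>
   's set \<Rightarrow> ('s \<Rightarrow> nat) \<Rightarrow> ('s \<Rightarrow> 'a) \<Rightarrow> 'l set \<Rightarrow> ('l \<Rightarrow> 'a) \<Rightarrow> bool" where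
  "expressivity_situation C E Bo Ba Om OmE pw prj Sig rank f Lam tau \<longleftrightarrow>
     is_category C \<and> is_clat_fibration C E \<and> is_endofunctor C Bo Ba \<and>
     Om \<in> obj C \<and> has_finite_powers C Om pw prj \<and> OmE \<in> fib E Om \<and>
     (\<forall>s\<in>Sig. f s \<in> hom C (pw (rank s)) Om \<and>
        \<comment> \<open>lifting g_s : OmE^rank(s) \<rightarrow> OmE above f s, where OmE^n = \<And>_i pi_i^* OmE
            is the n-th power of OmE in the total category\<close>
        f s \<in> ehom C E (pw (rank s))
                 (meet E (pw (rank s)) {reidx E (prj (rank s) i) OmE | i. i < rank s})
                 Om OmE) \<and>
     (\<forall>l\<in>Lam. tau l \<in> hom C (Bo Om) Om)"

datatype ('s, 'l) formula = Op 's "('s, 'l) formula list" | Mod 'l "('s, 'l) formula"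

fun wf_formula :: "'s set \<Rightarrow> ('s \<Rightarrow> nat) \<Rightarrow> 'l set \<Rightarrow> ('s, 'l) formula \<Rightarrow> bool" where
  "wf_formula Sig rank Lam (Op s ps) =
     (s \<in> Sig \<and> length ps = rank s \<and> (\<forall>p\<in>set ps. wf_formula Sig rank Lam p))"
| "wf_formula Sig rank Lam (Mod l p) = (l \<in> Lam \<and> wf_formula Sig rank Lam p)"

fun sem ::
  "('o, 'a) category_data \<Rightarrow> ('a \<Rightarrow> 'a) \<Rightarrow> (nat \<Rightarrow> 'o) \<Rightarrow> (nat \<Rightarrow> nat \<Rightarrow> 'a) \<Rightarrow>
   ('s \<Rightarrow> nat) \<Rightarrow> ('s \<Rightarrow> 'a) \<Rightarrow> ('l \<Rightarrow> 'a) \<Rightarrow> 'o \<Rightarrow> 'a \<Rightarrow> ('s, 'l) formula \<Rightarrow> 'a" where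
  "sem C Ba pw prj rank f tau X x (Op s ps) =
     comp C (f s) (tuple C pw prj X (rank s) (\<lambda>i. map (sem C Ba pw prj rank f tau X x) ps ! i))"
| "sem C Ba pw prj rank f tau X x (Mod l p) =
     comp C (tau l) (comp C (Ba (sem C Ba pw prj rank f tau X x p)) x)"

definition codensity_lifting ::
  "('o, 'a) category_data \<Rightarrow> ('o, 'a, 'e) clat_fibration \<Rightarrow> ('o \<Rightarrow> 'o) \<Rightarrow> ('a \<Rightarrow> 'a) \<Rightarrow>
   'o \<Rightarrow> 'e \<Rightarrow> 'l set \<Rightarrow> ('l \<Rightarrow> 'a) \<Rightarrow> 'o \<Rightarrow> 'e \<Rightarrow> 'e" where
  "codensity_lifting C E Bo Ba Om OmE Lam tau X P =
     meet E (Bo X) {reidx E (comp C (tau l) (Ba h)) OmE | l h. l \<in> Lam \<and> h \<in> ehom C E X P Om OmE}"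

definition fib_gfp :: "('o, 'a, 'e) clat_fibration \<Rightarrow> 'o \<Rightarrow> ('e \<Rightarrow> 'e) \<Rightarrow> 'e" where
  "fib_gfp E X F = (THE R. R \<in> fib E X \<and> F R = R \<and> (\<forall>S\<in>fib E X. F S = S \<longrightarrow> leq E X S R))"

definition codensity_bisim ::
  "('o, 'a) category_data \<Rightarrow> ('o, 'a, 'e) clat_fibration \<Rightarrow> ('o \<Rightarrow> 'o) \<Rightarrow> ('a \<Rightarrow> 'a) \<Rightarrow>
   'o \<Rightarrow> 'e \<Rightarrow> 'l set \<Rightarrow> ('l \<Rightarrow> 'a) \<Rightarrow> 'o \<Rightarrow> 'a \<Rightarrow> 'e" where
  "codensity_bisim C E Bo Ba Om OmE Lam tau X x =
     fib_gfp E X (\<lambda>R. reidx E x (codensity_lifting C E Bo Ba Om OmE Lam tau X R))"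

definition logical_equiv ::
  "('o, 'a) category_data \<Rightarrow> ('o, 'a, 'e) clat_fibration \<Rightarrow> ('a \<Rightarrow> 'a) \<Rightarrow> 'e \<Rightarrow>
   (nat \<Rightarrow> 'o) \<Rightarrow> (nat \<Rightarrow> nat \<Rightarrow> 'a) \<Rightarrow> 's set \<Rightarrow> ('s \<Rightarrow> nat) \<Rightarrow> ('s \<Rightarrow> 'a) \<Rightarrow>
   'l set \<Rightarrow> ('l \<Rightarrow> 'a) \<Rightarrow> 'o \<Rightarrow> 'a \<Rightarrow> 'e" where
  "logical_equiv C E Ba OmE pw prj Sig rank f Lam tau X x =
     meet E X {reidx E (sem C Ba pw prj rank f tau X x phi) OmE | phi. wf_formula Sig rank Lam phi}"

end

theory Submission
  imports Defs
begin

text \<open>Write \<open>Bbar\<close> for the codensity lifting and \<open>\<Omega>E\<close> for the object above \<open>\<Omega>\<close>. The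
  codensity bisimilarity \<open>G\<close> is a fixed point, hence a post-fixed point, of \<open>x\<^sup>* \<circ> Bbar\<close>.
  For every post-fixed point \<open>R\<close>, induction on \<open>\<phi>\<close> shows that \<open>[[\<phi>]]\<close> underlies an arrow
  \<open>R \<rightarrow> \<Omega>E\<close> of the total category. For \<open>\<sigma>(\<phi>\<^sub>1, \<dots>, \<phi>\<^sub>n)\<close>: reindexing preserves meets, so
  the tuple of the \<open>[[\<phi>\<^sub>i]]\<close> underlies an arrow into the power \<open>\<And>\<^sub>i \<pi>\<^sub>i\<^sup>* \<Omega>E\<close>, and the
  lifting \<open>g\<^sub>\<sigma>\<close> finishes. For \<open>\<heartsuit>\<^sub>\<lambda> \<phi>\<close>: \<open>[[\<phi>]]\<close> is one of the tests in the meet defining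
  \<open>Bbar R\<close>, so \<open>\<tau>\<^sub>\<lambda> \<circ> B[[\<phi>]]\<close> underlies an arrow \<open>Bbar R \<rightarrow> \<Omega>E\<close>, while \<open>x\<close> underlies
  \<open>R \<rightarrow> Bbar R\<close> by post-fixedness. Hence \<open>G \<sqsubseteq> [[\<phi>]]\<^sup>* \<Omega>E\<close> for every \<open>\<phi>\<close>.\<close>

lemma ex1_greatest_fixpoint_on:
  assumes refl: "\<And>P. P \<in> A \<Longrightarrow> le P P"
    and antisym: "\<And>P Q. P \<in> A \<Longrightarrow> Q \<in> A \<Longrightarrow> le P Q \<Longrightarrow> le Q P \<Longrightarrow> P = Q"
    and trans: "\<And>P Q R. P \<in> A \<Longrightarrow> Q \<in> A \<Longrightarrow> R \<in> A \<Longrightarrow> le P Q \<Longrightarrow> le Q R \<Longrightarrow> le P R"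
    and meet_closed: "\<And>S. S \<subseteq> A \<Longrightarrow> mt S \<in> A"
    and meet_lower: "\<And>S s. S \<subseteq> A \<Longrightarrow> s \<in> S \<Longrightarrow> le (mt S) s"
    and meet_greatest: "\<And>S y. S \<subseteq> A \<Longrightarrow> y \<in> A \<Longrightarrow> (\<And>s. s \<in> S \<Longrightarrow> le y s) \<Longrightarrow> le y (mt S)"
    and F_closed: "\<And>P. P \<in> A \<Longrightarrow> F P \<in> A"
    and F_mono: "\<And>P Q. P \<in> A \<Longrightarrow> Q \<in> A \<Longrightarrow> le P Q \<Longrightarrow> le (F P) (F Q)"
  shows "\<exists>!R. R \<in> A \<and> F R = R \<and> (\<forall>S\<in>A. F S = S \<longrightarrow> le S R)"
proof -
  define post where "post = {y \<in> A. le y (F y)}"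
  define U where "U = {u \<in> A. \<forall>s\<in>post. le s u}"
  define G where "G = mt U"
  have U_sub: "U \<subseteq> A" by (auto simp: U_def)
  have G_in: "G \<in> A" unfolding G_def using U_sub by (rule meet_closed)
  have post_le_G: "le s G" if "s \<in> post" for s
    unfolding G_def using U_sub that by (intro meet_greatest) (auto simp: U_def post_def)
  have "F G \<in> U"
  proof -
    have "le s (F G)" if "s \<in> post" for s
    proof -
      have s: "s \<in> A" "le s (F s)" using that by (auto simp: post_def)
      moreover have "le (F s) (F G)" using F_mono[OF s(1) G_in post_le_G[OF that]] .
      ultimately show ?thesis using trans F_closed G_in by blast
    qed
    then show ?thesis using F_closed[OF G_in] by (auto simp: U_def)
  qed
  then have G_post: "le G (F G)" unfolding G_def by (rule meet_lower[OF U_sub])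
  then have "F G \<in> post" using F_closed[OF G_in] F_mono[OF G_in F_closed[OF G_in]]
    by (auto simp: post_def)
  then have "F G = G" using antisym F_closed G_in G_post post_le_G by blast
  moreover have "\<forall>T\<in>A. F T = T \<longrightarrow> le T G" using post_le_G refl by (auto simp: post_def)
  ultimately show ?thesis using G_in antisym by blast
qed

lemma tuple_universal:
  assumes power: "is_power C Om n (pw n) (prj n)" and X: "X \<in> obj C"
    and fs: "\<And>i. i < n \<Longrightarrow> fs i \<in> hom C X Om"
  shows "tuple C pw prj X n fs \<in> hom C X (pw n)"
    and "\<And>i. i < n \<Longrightarrow> comp C (prj n i) (tuple C pw prj X n fs) = fs i"
proof -
  have "\<exists>!h. h \<in> hom C X (pw n) \<and> (\<forall>i<n. comp C (prj n i) h = fs i)"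
    using power X fs unfolding is_power_def by blast
  then have "tuple C pw prj X n fs \<in> hom C X (pw n) \<and>
      (\<forall>i<n. comp C (prj n i) (tuple C pw prj X n fs) = fs i)"
    unfolding tuple_def by (rule theI')
  then show "tuple C pw prj X n fs \<in> hom C X (pw n)"
    and "\<And>i. i < n \<Longrightarrow> comp C (prj n i) (tuple C pw prj X n fs) = fs i"
    by auto
qed

locale clat_fibred_category =
  fixes C :: "('o, 'a) category_data" and E :: "('o, 'a, 'e) clat_fibration"
  assumes category: "is_category C" and fibration: "is_clat_fibration C E"
begin

lemma hom_objD: "f \<in> hom C X Y \<Longrightarrow> X \<in> obj C \<and> Y \<in> obj C"
  using category unfolding is_category_def hom_def by blast

lemma comp_in_hom: "f \<in> hom C X Y \<Longrightarrow> g \<in> hom C Y Z \<Longrightarrow> comp C g f \<in> hom C X Z"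
  using category unfolding is_category_def hom_def by auto

lemma comp_assoc:
  "f \<in> hom C X Y \<Longrightarrow> g \<in> hom C Y Z \<Longrightarrow> h \<in> hom C Z W \<Longrightarrow>
   comp C h (comp C g f) = comp C (comp C h g) f"
  using category unfolding is_category_def hom_def by auto

lemma leq_refl: "X \<in> obj C \<Longrightarrow> P \<in> fib E X \<Longrightarrow> leq E X P P"
  using fibration unfolding is_clat_fibration_def by metis

lemma leq_antisym:
  "X \<in> obj C \<Longrightarrow> P \<in> fib E X \<Longrightarrow> Q \<in> fib E X \<Longrightarrow> leq E X P Q \<Longrightarrow> leq E X Q P \<Longrightarrow> P = Q"
  using fibration unfolding is_clat_fibration_def by metis

lemma leq_trans:
  "X \<in> obj C \<Longrightarrow> P \<in> fib E X \<Longrightarrow> Q \<in> fib E X \<Longrightarrow> R \<in> fib E X \<Longrightarrow>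
   leq E X P Q \<Longrightarrow> leq E X Q R \<Longrightarrow> leq E X P R"
  using fibration unfolding is_clat_fibration_def by metis

lemma meet_in_fib: "X \<in> obj C \<Longrightarrow> S \<subseteq> fib E X \<Longrightarrow> meet E X S \<in> fib E X"
  using fibration unfolding is_clat_fibration_def by metis

lemma meet_lower: "X \<in> obj C \<Longrightarrow> S \<subseteq> fib E X \<Longrightarrow> s \<in> S \<Longrightarrow> leq E X (meet E X S) s"
  using fibration unfolding is_clat_fibration_def by metis

lemma meet_greatest:
  "X \<in> obj C \<Longrightarrow> S \<subseteq> fib E X \<Longrightarrow> y \<in> fib E X \<Longrightarrow> (\<And>s. s \<in> S \<Longrightarrow> leq E X y s) \<Longrightarrow>
   leq E X y (meet E X S)"
  using fibration unfolding is_clat_fibration_def by metis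

lemma reidx_in_fib: "f \<in> hom C X Y \<Longrightarrow> P \<in> fib E Y \<Longrightarrow> reidx E f P \<in> fib E X"
  using fibration unfolding is_clat_fibration_def by metis

lemma reidx_meet:
  "f \<in> hom C X Y \<Longrightarrow> S \<subseteq> fib E Y \<Longrightarrow> reidx E f (meet E Y S) = meet E X (reidx E f ` S)"
  using fibration unfolding is_clat_fibration_def by metis

lemma reidx_comp:
  "f \<in> hom C X Y \<Longrightarrow> g \<in> hom C Y Z \<Longrightarrow> P \<in> fib E Z \<Longrightarrow>
   reidx E (comp C g f) P = reidx E f (reidx E g P)"
  using fibration unfolding is_clat_fibration_def by metis


lemma reidx_mono:
  assumes f: "f \<in> hom C X Y" and P: "P \<in> fib E Y" and Q: "Q \<in> fib E Y" and le: "leq E Y P Q"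
  shows "leq E X (reidx E f P) (reidx E f Q)"
proof -
  have X: "X \<in> obj C" and Y: "Y \<in> obj C" using hom_objD[OF f] by auto
  have PQ: "{P, Q} \<subseteq> fib E Y" using P Q by auto
  have "meet E Y {P, Q} = P"
  proof (rule leq_antisym[OF Y meet_in_fib[OF Y PQ] P])
    show "leq E Y (meet E Y {P, Q}) P" by (rule meet_lower[OF Y PQ]) simp
    show "leq E Y P (meet E Y {P, Q})"
      by (rule meet_greatest[OF Y PQ P]) (use leq_refl[OF Y P] le in auto)
  qed
  then have "reidx E f P = meet E X (reidx E f ` {P, Q})"
    using reidx_meet[OF f PQ] by simp
  also have "leq E X \<dots> (reidx E f Q)"
    by (rule meet_lower[OF X]) (use reidx_in_fib[OF f] P Q in auto)
  finally show ?thesis .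
qed

lemma meet_antimono:
  assumes X: "X \<in> obj C" and "S \<subseteq> T" and T: "T \<subseteq> fib E X"
  shows "leq E X (meet E X T) (meet E X S)"
  using assms by (intro meet_greatest meet_in_fib meet_lower) auto

lemma ehom_comp:
  assumes f: "f \<in> ehom C E X P Y Q" and g: "g \<in> ehom C E Y Q Z R"
    and P: "P \<in> fib E X" and Q: "Q \<in> fib E Y" and R: "R \<in> fib E Z"
  shows "comp C g f \<in> ehom C E X P Z R"
proof -
  have f_hom: "f \<in> hom C X Y" and g_hom: "g \<in> hom C Y Z"
    and P_le: "leq E X P (reidx E f Q)" and Q_le: "leq E Y Q (reidx E g R)"
    using f g by (auto simp: ehom_def)
  have X: "X \<in> obj C" using hom_objD[OF f_hom] by blast
  have "leq E X (reidx E f Q) (reidx E f (reidx E g R))"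
    by (rule reidx_mono[OF f_hom Q reidx_in_fib[OF g_hom R] Q_le])
  then have "leq E X P (reidx E f (reidx E g R))"
    by (rule leq_trans[OF X P reidx_in_fib[OF f_hom Q]
          reidx_in_fib[OF f_hom reidx_in_fib[OF g_hom R]] P_le])
  then show ?thesis
    using comp_in_hom[OF f_hom g_hom] reidx_comp[OF f_hom g_hom R] by (simp add: ehom_def)
qed

lemma fib_gfp_fixpoint:
  assumes X: "X \<in> obj C"
    and closed: "\<And>P. P \<in> fib E X \<Longrightarrow> F P \<in> fib E X"
    and mono: "\<And>P Q. P \<in> fib E X \<Longrightarrow> Q \<in> fib E X \<Longrightarrow> leq E X P Q \<Longrightarrow> leq E X (F P) (F Q)"
  shows "fib_gfp E X F \<in> fib E X" and "F (fib_gfp E X F) = fib_gfp E X F"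
proof -
  have "\<exists>!R. R \<in> fib E X \<and> F R = R \<and> (\<forall>S\<in>fib E X. F S = S \<longrightarrow> leq E X S R)"
    by (rule ex1_greatest_fixpoint_on[OF leq_refl[OF X] leq_antisym[OF X] leq_trans[OF X]
          meet_in_fib[OF X] meet_lower[OF X] meet_greatest[OF X] closed mono])
  from theI'[OF this] show "fib_gfp E X F \<in> fib E X" and "F (fib_gfp E X F) = fib_gfp E X F"
    unfolding fib_gfp_def by auto
qed

lemma tuple_in_ehom_power:
  assumes power: "is_power C Om n (pw n) (prj n)" and X: "X \<in> obj C"
    and R: "R \<in> fib E X" and Q: "Q \<in> fib E Om"
    and fs: "\<And>i. i < n \<Longrightarrow> fs i \<in> ehom C E X R Om Q"
  shows "tuple C pw prj X n fs \<in> ehom C E X R (pw n) (meet E (pw n) {reidx E (prj n i) Q | i. i < n})"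
proof -
  define t where "t = tuple C pw prj X n fs"
  define Ps where "Ps = {reidx E (prj n i) Q | i. i < n}"
  have prj: "\<And>i. i < n \<Longrightarrow> prj n i \<in> hom C (pw n) Om" using power by (simp add: is_power_def)
  have fs_hom: "\<And>i. i < n \<Longrightarrow> fs i \<in> hom C X Om" using fs by (simp add: ehom_def)
  have t: "t \<in> hom C X (pw n)" and t_prj: "\<And>i. i < n \<Longrightarrow> comp C (prj n i) t = fs i"
    unfolding t_def using tuple_universal[of C Om n pw prj X fs, OF power X fs_hom] by blast+
  have Ps: "Ps \<subseteq> fib E (pw n)" using reidx_in_fib[OF prj Q] by (auto simp: Ps_def)
  have "leq E X R (meet E X (reidx E t ` Ps))"
  proof (rule meet_greatest[OF X _ R])
    show "reidx E t ` Ps \<subseteq> fib E X" using Ps reidx_in_fib[OF t] by auto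
  next
    fix y assume "y \<in> reidx E t ` Ps"
    then obtain i where i: "i < n" and "y = reidx E t (reidx E (prj n i) Q)" by (auto simp: Ps_def)
    then have "y = reidx E (fs i) Q" using reidx_comp[OF t prj[OF i] Q] t_prj[OF i] by simp
    then show "leq E X R y" using fs[OF i] by (simp add: ehom_def)
  qed
  then have "t \<in> ehom C E X R (pw n) (meet E (pw n) Ps)"
    using t by (simp add: ehom_def reidx_meet[OF t Ps])
  then show ?thesis by (simp only: t_def Ps_def)
qed

end

locale expressivity_setting =
  fixes C :: "('o, 'a) category_data" and E :: "('o, 'a, 'e) clat_fibration"
    and Bo :: "'o \<Rightarrow> 'o" and Ba :: "'a \<Rightarrow> 'a" and Om :: 'o and OmE :: 'e
    and pw :: "nat \<Rightarrow> 'o" and prj :: "nat \<Rightarrow> nat \<Rightarrow> 'a"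
    and Sig :: "'s set" and rank :: "'s \<Rightarrow> nat" and f :: "'s \<Rightarrow> 'a"
    and Lam :: "'l set" and tau :: "'l \<Rightarrow> 'a"
  assumes situation: "expressivity_situation C E Bo Ba Om OmE pw prj Sig rank f Lam tau"
begin

sublocale clat_fibred_category C E
  using situation by unfold_locales (simp_all add: expressivity_situation_def)

lemma OmE_in_fib: "OmE \<in> fib E Om"
  using situation by (simp add: expressivity_situation_def)

lemma Bo_in_obj: "X \<in> obj C \<Longrightarrow> Bo X \<in> obj C"
  using situation by (simp add: expressivity_situation_def is_endofunctor_def)

lemma Ba_in_hom: "h \<in> hom C X Y \<Longrightarrow> Ba h \<in> hom C (Bo X) (Bo Y)"
  using situation by (simp add: expressivity_situation_def is_endofunctor_def)

lemma is_power_Om: "is_power C Om n (pw n) (prj n)"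
  using situation by (simp add: expressivity_situation_def has_finite_powers_def)

lemma sig_in_ehom:
  "s \<in> Sig \<Longrightarrow>
   f s \<in> ehom C E (pw (rank s)) (meet E (pw (rank s)) {reidx E (prj (rank s) i) OmE | i. i < rank s})
     Om OmE"
  using situation by (simp add: expressivity_situation_def)

lemma tau_in_hom: "l \<in> Lam \<Longrightarrow> tau l \<in> hom C (Bo Om) Om"
  using situation by (simp add: expressivity_situation_def)

abbreviation lifting :: "'o \<Rightarrow> 'e \<Rightarrow> 'e" where
  "lifting \<equiv> codensity_lifting C E Bo Ba Om OmE Lam tau"

abbreviation den :: "'o \<Rightarrow> 'a \<Rightarrow> ('s, 'l) formula \<Rightarrow> 'a" where
  "den \<equiv> sem C Ba pw prj rank f tau"

lemma modality_in_hom: "l \<in> Lam \<Longrightarrow> h \<in> hom C X Om \<Longrightarrow> comp C (tau l) (Ba h) \<in> hom C (Bo X) Om"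
  using comp_in_hom Ba_in_hom tau_in_hom by blast

lemma lifting_in_fib: "X \<in> obj C \<Longrightarrow> lifting X P \<in> fib E (Bo X)"
  unfolding codensity_lifting_def
  by (rule meet_in_fib[OF Bo_in_obj])
    (auto simp: ehom_def intro: reidx_in_fib[OF modality_in_hom OmE_in_fib])

lemma modality_in_ehom_lifting:
  assumes X: "X \<in> obj C" and l: "l \<in> Lam" and h: "h \<in> ehom C E X P Om OmE"
  shows "comp C (tau l) (Ba h) \<in> ehom C E (Bo X) (lifting X P) Om OmE"
proof -
  have "leq E (Bo X) (lifting X P) (reidx E (comp C (tau l) (Ba h)) OmE)"
    unfolding codensity_lifting_def using l h
    by (intro meet_lower[OF Bo_in_obj[OF X]])
      (auto simp: ehom_def intro: reidx_in_fib[OF modality_in_hom OmE_in_fib])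
  with modality_in_hom[OF l] h show ?thesis by (simp add: ehom_def)
qed

lemma lifting_mono:
  assumes X: "X \<in> obj C" and P: "P \<in> fib E X" and Q: "Q \<in> fib E X" and le: "leq E X P Q"
  shows "leq E (Bo X) (lifting X P) (lifting X Q)"
proof -
  have "ehom C E X Q Om OmE \<subseteq> ehom C E X P Om OmE"
    using leq_trans[OF X P Q reidx_in_fib[OF _ OmE_in_fib] le] by (auto simp: ehom_def)
  then show ?thesis
    unfolding codensity_lifting_def
    by (intro meet_antimono[OF Bo_in_obj[OF X]])
      (auto simp: ehom_def intro: reidx_in_fib[OF modality_in_hom OmE_in_fib])
qed

lemma codensity_bisim_fixpoint:
  assumes x: "x \<in> hom C X (Bo X)"
  defines "G \<equiv> codensity_bisim C E Bo Ba Om OmE Lam tau X x"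
  shows "G \<in> fib E X" and "reidx E x (lifting X G) = G"
proof -
  have X: "X \<in> obj C" using hom_objD[OF x] by blast
  define F where "F = (\<lambda>R. reidx E x (lifting X R))"
  have closed: "F P \<in> fib E X" for P
    unfolding F_def by (rule reidx_in_fib[OF x lifting_in_fib[OF X]])
  have mono: "leq E X (F P) (F Q)" if "P \<in> fib E X" "Q \<in> fib E X" "leq E X P Q" for P Q
    unfolding F_def
    by (rule reidx_mono[OF x lifting_in_fib[OF X] lifting_in_fib[OF X] lifting_mono[OF X that]])
  have "G = fib_gfp E X F" unfolding G_def codensity_bisim_def F_def ..
  then show "G \<in> fib E X" and "reidx E x (lifting X G) = G"
    using fib_gfp_fixpoint[OF X closed mono] by (simp_all add: F_def)
qed

lemma den_in_ehom_postfixpoint: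
  assumes x: "x \<in> hom C X (Bo X)" and R: "R \<in> fib E X"
    and post: "leq E X R (reidx E x (lifting X R))"
    and wf: "wf_formula Sig rank Lam phi"
  shows "den X x phi \<in> ehom C E X R Om OmE"
proof -
  have X: "X \<in> obj C" using hom_objD[OF x] by blast
  show ?thesis using wf
  proof (induction phi)
    case (Op s ps)
    let ?n = "rank s" and ?Ps = "{reidx E (prj (rank s) i) OmE | i. i < rank s}"
    have s: "s \<in> Sig" and len: "length ps = ?n" and wf: "\<forall>p\<in>set ps. wf_formula Sig rank Lam p"
      using Op.prems by auto
    have args: "map (den X x) ps ! i \<in> ehom C E X R Om OmE" if "i < ?n" for i
      using Op.IH wf that len by auto
    have pw: "pw ?n \<in> obj C" using is_power_Om by (simp add: is_power_def)
    have Ps: "?Ps \<subseteq> fib E (pw ?n)"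
      using reidx_in_fib[OF _ OmE_in_fib] is_power_Om by (auto simp: is_power_def)
    have "tuple C pw prj X ?n (\<lambda>i. map (den X x) ps ! i) \<in> ehom C E X R (pw ?n) (meet E (pw ?n) ?Ps)"
      by (rule tuple_in_ehom_power[OF is_power_Om X R OmE_in_fib args])
    from ehom_comp[OF this sig_in_ehom[OF s] R meet_in_fib[OF pw Ps] OmE_in_fib]
    show ?case by simp
  next
    case (Mod l p)
    have l: "l \<in> Lam" and p: "den X x p \<in> ehom C E X R Om OmE" using Mod by auto
    have "x \<in> ehom C E X R (Bo X) (lifting X R)" using x post by (simp add: ehom_def)
    from ehom_comp[OF this modality_in_ehom_lifting[OF X l p] R lifting_in_fib[OF X] OmE_in_fib]
    show ?case
      using comp_assoc[OF x Ba_in_hom tau_in_hom[OF l]] p by (simp add: ehom_def)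
  qed
qed

end

theorem mainTheorem1:
  assumes "expressivity_situation C E Bo Ba Om OmE pw prj Sig rank f Lam tau"
    and "X \<in> obj C"
    and "x \<in> hom C X (Bo X)"
  shows "leq E X (codensity_bisim C E Bo Ba Om OmE Lam tau X x)
                 (logical_equiv C E Ba OmE pw prj Sig rank f Lam tau X x)"
proof -
  interpret expressivity_setting C E Bo Ba Om OmE pw prj Sig rank f Lam tau
    using assms(1) by (rule expressivity_setting.intro)
  let ?G = "codensity_bisim C E Bo Ba Om OmE Lam tau X x"
  have G: "?G \<in> fib E X" and post: "leq E X ?G (reidx E x (lifting X ?G))"
    using codensity_bisim_fixpoint[OF assms(3)] leq_refl[OF assms(2)] by auto
  have "den X x phi \<in> ehom C E X ?G Om OmE" if "wf_formula Sig rank Lam phi" for phi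
    using den_in_ehom_postfixpoint[OF assms(3) G post that] .
  then show ?thesis
    unfolding logical_equiv_def
    by (intro meet_greatest[OF assms(2)] G) (auto simp: ehom_def intro: reidx_in_fib[OF _ OmE_in_fib])
qed

end
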